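(* Let $n\ge1$. For all $0\le a,b\le n$ and $0\le i,j\le n-1$ the following identity of operators on $F^{\otimes(n-1)}$ holds: \[ \sum_{a',b'=0}^{n-1}R(y/x)^{a',b'}_{i,j}\,T(y)_{b'b}\,T(x)_{a'a}=\sum_{i',j'=0}^{n}T(x)_{ii'}\,T(y)_{jj'}\,R(y/x)^{a,b}_{i',j'}. \]
   Context: $R$ matrix (indices in $\{0,\dots,n\}$): $R(z)^{\alpha,\alpha}_{\alpha,\alpha}=1$; for $\alpha\ne\beta$, $R(z)^{\alpha,\beta}_{\alpha,\beta}=\frac{(1-z)t^{\theta(\alpha<\beta)}}{1-tz}$, $R(z)^{\beta,\alpha}_{\alpha,\beta}=\frac{(1-t)z^{\theta(\alpha>\beta)}}{1-tz}$; all other entries $0$; $\theta(\text{true})=1,\theta(\text{false})=0$. Oscillators: $F=\bigoplus_{d\ge0}\mathbb{Q}(t)|d\rangle$, $\mathbf{a}^+|d\rangle=|d+1\rangle$, $\mathbf{a}^-|d\rangle=(1-t^d)|d-1\rangle$ ($|-1\rangle=0$), $\mathbf{k}|d\rangle=t^d|d\rangle$; on $F^{\otimes(n-1)}$, $\mathbf{a}^\pm_r,\mathbf{k}_r$ act on the $r$-th factor ($1\le r\le n-1$), and $\mathbf{a}^+_0:=1$. $T(z)_{i\alpha}$ for $0\le i\le n-1$, $0\le\alpha\le n$: $T(z)_{i0}=\mathbf{a}^+_i$; for $\alpha\ge1$, $T(z)_{i\alpha}=z\,\mathbf{k}_\alpha\cdots\mathbf{k}_{n-1}$ if $\alpha=i+1$,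 $T(z)_{i\alpha}=z\,\mathbf{a}^+_i\mathbf{a}^-_{\alpha-1}\mathbf{k}_\alpha\cdots\mathbf{k}_{n-1}$ if $\alpha\ge i+2$, and $T(z)_{i\alpha}=0$ if $\alpha\le i$ (empty products equal $1$). *)

theory Defs
  imports Main
begin

(* Vectors in F^{\<otimes>(n-1)}: coefficient functions on basis states |d_1,...,d_{n-1}>,
   a basis state being a function e :: nat \<Rightarrow> nat (only e 1, ..., e (n-1) are relevant). *)
type_synonym 'a fvec = "(nat \<Rightarrow> nat) \<Rightarrow> 'a"

(* a^+_r |d> = |d+1> on factor r;  a^+_0 := 1 *)
definition osc_ap :: "nat \<Rightarrow> 'a::field fvec \<Rightarrow> 'a fvec" where
  "osc_ap r v = (\<lambda>e. if r = 0 then v e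
                      else if e r = 0 then 0 else v (e(r := e r - 1)))"

(* a^-_r |d> = (1 - t^d) |d-1> on factor r *)
definition osc_am :: "'a::field \<Rightarrow> nat \<Rightarrow> 'a fvec \<Rightarrow> 'a fvec" where
  "osc_am t r v = (\<lambda>e. (1 - t ^ Suc (e r)) * v (e(r := Suc (e r))))"

definition osc_k :: "'a::field \<Rightarrow> nat \<Rightarrow> 'a fvec \<Rightarrow> 'a fvec" where
  "osc_k t r v = (\<lambda>e. t ^ e r * v e)"

definition osc_kprod :: "'a::field \<Rightarrow> nat \<Rightarrow> nat \<Rightarrow> 'a fvec \<Rightarrow> 'a fvec" where
  "osc_kprod t \<alpha> n v = foldr (osc_k t) [\<alpha>..<n] v"

definition Tmat :: "'a::field \<Rightarrow> nat \<Rightarrow> 'a \<Rightarrow> nat \<Rightarrow> nat \<Rightarrow> 'a fvec \<Rightarrow> 'a fvec" where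
  "Tmat t n z i \<alpha> v =
     (if \<alpha> = 0 then osc_ap i v
      else if \<alpha> = i + 1 then (\<lambda>e. z * osc_kprod t \<alpha> n v e)
      else if \<alpha> \<ge> i + 2 then (\<lambda>e. z * osc_ap i (osc_am t (\<alpha> - 1) (osc_kprod t \<alpha> n v)) e)
      else (\<lambda>e. 0))"

definition Rmat :: "'a::field \<Rightarrow> 'a \<Rightarrow> nat \<Rightarrow> nat \<Rightarrow> nat \<Rightarrow> nat \<Rightarrow> 'a" where
  "Rmat t z \<gamma> \<delta> \<alpha> \<beta> =
     (if \<alpha> = \<beta> then (if \<gamma> = \<alpha> \<and> \<delta> = \<beta> then 1 else 0)
      else if \<gamma> = \<alpha> \<and> \<delta> = \<beta> then (1 - z) * t ^ (if \<alpha> < \<beta> then 1 else 0) / (1 - t * z)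
      else if \<gamma> = \<beta> \<and> \<delta> = \<alpha> then (1 - t) * z ^ (if \<alpha> > \<beta> then 1 else 0) / (1 - t * z)
      else 0)"

end

theory Submission
  imports Defs
begin

(*
  Write T(z)_{i\<alpha>} = z^[\<alpha> \<noteq> 0] T(1)_{i\<alpha>}. Every row and every column of R(z) has at
  most two nonzero entries, so both sides of the relation collapse to at most two products
  of entries of T. Depending on the relative position of the rows i, j and of the columns
  a, b, the identity then reduces to a single exchange relation between entries of T(1):
  entries of one row t-commute, entries of one column commute, and entries in different
  rows and columns are exchanged up to a correction term (1 - t) times the product of the
  two complementary entries. The exchange relations are finite computations on basis states.
*)

lemma sum_sum_delta:
  fixes G :: "nat \<Rightarrow> nat \<Rightarrow> 'a::comm_monoid_add"
  assumes "p \<le> m" "q \<le> m"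
  shows "(\<Sum>x=0..m. \<Sum>y=0..m. if x = p \<and> y = q then G x y else 0) = G p q"
proof -
  have "(\<Sum>x=0..m. \<Sum>y=0..m. if x = p \<and> y = q then G x y else 0) = (\<Sum>x=0..m. if x = p then G x q else 0)"
    using assms by (intro sum.cong) (simp_all add: sum.delta)
  also have "\<dots> = G p q"
    using assms by (simp add: sum.delta)
  finally show ?thesis .
qed

lemma sum_Rmat_upper:
  fixes F :: "nat \<Rightarrow> nat \<Rightarrow> 'a::field"
  assumes "i \<le> m" "j \<le> m"
  shows "(\<Sum>a'=0..m. \<Sum>b'=0..m. Rmat t z a' b' i j * F a' b') =
    (if i = j then F i i else Rmat t z i j i j * F i j + Rmat t z j i i j * F j i)"
proof (cases "i = j")
  case True
  have "(\<Sum>a'=0..m. \<Sum>b'=0..m. Rmat t z a' b' i j * F a' b') =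
        (\<Sum>a'=0..m. \<Sum>b'=0..m. if a' = i \<and> b' = i then F a' b' else 0)"
    using True by (intro sum.cong) (auto simp: Rmat_def)
  then show ?thesis
    using True assms by (simp add: sum_sum_delta)
next
  case False
  have "(\<Sum>a'=0..m. \<Sum>b'=0..m. Rmat t z a' b' i j * F a' b') =
        (\<Sum>a'=0..m. \<Sum>b'=0..m. (if a' = i \<and> b' = j then Rmat t z i j i j * F a' b' else 0)
          + (if a' = j \<and> b' = i then Rmat t z j i i j * F a' b' else 0))"
    using False by (intro sum.cong) (auto simp: Rmat_def)
  then show ?thesis
    using False assms by (simp add: sum.distrib sum_sum_delta)
qed

lemma sum_Rmat_lower:
  fixes F :: "nat \<Rightarrow> nat \<Rightarrow> 'a::field"
  assumes "a \<le> m" "b \<le> m"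
  shows "(\<Sum>i'=0..m. \<Sum>j'=0..m. F i' j' * Rmat t z a b i' j') =
    (if a = b then F a a else F a b * Rmat t z a b a b + F b a * Rmat t z a b b a)"
proof (cases "a = b")
  case True
  have "(\<Sum>i'=0..m. \<Sum>j'=0..m. F i' j' * Rmat t z a b i' j') =
        (\<Sum>i'=0..m. \<Sum>j'=0..m. if i' = a \<and> j' = a then F i' j' else 0)"
    using True by (intro sum.cong) (auto simp: Rmat_def)
  then show ?thesis
    using True assms by (simp add: sum_sum_delta)
next
  case False
  have "(\<Sum>i'=0..m. \<Sum>j'=0..m. F i' j' * Rmat t z a b i' j') =
        (\<Sum>i'=0..m. \<Sum>j'=0..m. (if i' = a \<and> j' = b then F i' j' * Rmat t z a b a b else 0)
          + (if i' = b \<and> j' = a then F i' j' * Rmat t z a b b a else 0))"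
    using False by (intro sum.cong) (auto simp: Rmat_def)
  then show ?thesis
    using False assms by (simp add: sum.distrib sum_sum_delta)
qed

definition kprod_exponent :: "nat \<Rightarrow> nat \<Rightarrow> (nat \<Rightarrow> nat) \<Rightarrow> nat" where
  "kprod_exponent \<alpha> n e = (\<Sum>r\<in>{\<alpha>..<n}. e r)"

lemma osc_kprod_apply: "osc_kprod t \<alpha> n v e = t ^ kprod_exponent \<alpha> n e * v e"
proof (induction n arbitrary: v)
  case 0
  then show ?case by (simp add: osc_kprod_def kprod_exponent_def)
next
  case (Suc n)
  then show ?case
    by (cases "\<alpha> \<le> n") (simp_all add: osc_kprod_def osc_k_def kprod_exponent_def power_add mult_ac)
qed

lemma kprod_exponent_upd_below:
  "r < \<alpha> \<Longrightarrow> kprod_exponent \<alpha> n (e(r := m)) = kprod_exponent \<alpha> n e"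
  unfolding kprod_exponent_def by (auto intro!: sum.cong)

lemma kprod_exponent_upd_Suc:
  assumes "e r = k"
  shows "kprod_exponent \<alpha> n (e(r := Suc k)) =
    (if \<alpha> \<le> r \<and> r < n then Suc (kprod_exponent \<alpha> n e) else kprod_exponent \<alpha> n e)"
proof (cases "\<alpha> \<le> r \<and> r < n")
  case True
  have "kprod_exponent \<alpha> n (e(r := Suc k)) = Suc k + (\<Sum>s\<in>{\<alpha>..<n} - {r}. e s)"
    using True by (simp add: kprod_exponent_def sum.remove)
  moreover have "kprod_exponent \<alpha> n e = k + (\<Sum>s\<in>{\<alpha>..<n} - {r}. e s)"
    using True assms by (simp add: kprod_exponent_def sum.remove)
  ultimately show ?thesis
    using True by simp
next
  case False
  then show ?thesis
    unfolding kprod_exponent_def by (auto intro!: sum.cong)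
qed

lemma kprod_exponent_upd_Suc_Suc:
  "e r = k \<Longrightarrow> kprod_exponent \<alpha> n (e(r := Suc (Suc k))) =
    (if \<alpha> \<le> r \<and> r < n then Suc (Suc (kprod_exponent \<alpha> n e)) else kprod_exponent \<alpha> n e)"
  using kprod_exponent_upd_Suc[of "e(r := Suc k)" r "Suc k" \<alpha> n] kprod_exponent_upd_Suc[of e r k \<alpha> n]
  by simp

definition Tunit :: "'a::field \<Rightarrow> nat \<Rightarrow> nat \<Rightarrow> nat \<Rightarrow> 'a fvec \<Rightarrow> 'a fvec" where
  "Tunit t n = Tmat t n 1"

lemma Tmat_eq_scale_Tunit: "Tmat t n z i \<alpha> v e = (if \<alpha> = 0 then 1 else z) * Tunit t n i \<alpha> v e"
  by (simp add: Tunit_def Tmat_def)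

lemma Tunit_scale: "Tunit t n i \<alpha> (\<lambda>e. c * w e) e = c * Tunit t n i \<alpha> w e"
  by (simp add: Tunit_def Tmat_def osc_ap_def osc_am_def osc_kprod_apply mult_ac)

lemma Tmat_Tmat_eq_scale_Tunit_Tunit:
  "Tmat t n y p \<beta> (Tmat t n x q \<alpha> v) e =
    (if \<beta> = 0 then 1 else y) * (if \<alpha> = 0 then 1 else x) * Tunit t n p \<beta> (Tunit t n q \<alpha> v) e"
proof -
  have "Tmat t n x q \<alpha> v = (\<lambda>e. (if \<alpha> = 0 then 1 else x) * Tunit t n q \<alpha> v e)"
    using Tmat_eq_scale_Tunit by blast
  then show ?thesis
    by (simp add: Tmat_eq_scale_Tunit[of t n y] Tunit_scale)
qed

lemma Tunit_row0_col0: "Tunit t n 0 0 v e = v e"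
  by (simp add: Tunit_def Tmat_def osc_ap_def)

lemma Tunit_col0: "0 < i \<Longrightarrow> Tunit t n i 0 v e = (if e i = 0 then 0 else v (e(i := e i - 1)))"
  by (simp add: Tunit_def Tmat_def osc_ap_def)

lemma Tunit_below_diag: "a < i \<Longrightarrow> Tunit t n i (Suc a) v e = 0"
  by (simp add: Tunit_def Tmat_def)

lemma Tunit_diag: "Tunit t n i (Suc i) v e = t ^ kprod_exponent (Suc i) n e * v e"
  by (simp add: Tunit_def Tmat_def osc_kprod_apply)

lemma Tunit_row0_above_diag:
  "0 < a \<Longrightarrow> Tunit t n 0 (Suc a) v e =
    (1 - t ^ Suc (e a)) * (t ^ kprod_exponent (Suc a) n e * v (e(a := Suc (e a))))"
  by (simp add: Tunit_def Tmat_def osc_ap_def osc_am_def osc_kprod_apply kprod_exponent_upd_below)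

lemma Tunit_above_diag:
  "0 < i \<Longrightarrow> i < a \<Longrightarrow> Tunit t n i (Suc a) v e =
    (if e i = 0 then 0
     else (1 - t ^ Suc (e a)) * (t ^ kprod_exponent (Suc a) n e * v (e(i := e i - 1, a := Suc (e a)))))"
  by (simp add: Tunit_def Tmat_def osc_ap_def osc_am_def osc_kprod_apply kprod_exponent_upd_below)

lemmas Tunit_simps = Tunit_row0_col0 Tunit_col0 Tunit_below_diag Tunit_diag
  Tunit_row0_above_diag Tunit_above_diag
  kprod_exponent_upd_Suc kprod_exponent_upd_Suc_Suc kprod_exponent_upd_below
  fun_upd_twist fun_upd_idem

lemma state_induct_one_site:
  assumes "\<And>f. f i = 0 \<Longrightarrow> P f"
    and "\<And>f. f i = 0 \<Longrightarrow> P (f(i := Suc (f i)))"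
    and "\<And>f. P (f(i := Suc (Suc (f i))))"
  shows "P e"
proof (cases "e i")
  case 0
  then show ?thesis using assms(1) by simp
next
  case (Suc m)
  show ?thesis
  proof (cases m)
    case 0
    have "e = (e(i := 0))(i := Suc ((e(i := 0)) i))"
      using Suc 0 by auto
    then show ?thesis using assms(2)[of "e(i := 0)"] by simp
  next
    case (Suc k)
    have "e = (e(i := k))(i := Suc (Suc ((e(i := k)) i)))"
      using Suc \<open>e i = Suc m\<close> by auto
    then show ?thesis using assms(3)[of "e(i := k)"] by simp
  qed
qed

lemma state_induct_two_sites:
  assumes "i \<noteq> j"
    and "\<And>f. f i = 0 \<Longrightarrow> f j = 0 \<Longrightarrow> P f"
    and "\<And>f. f i = 0 \<Longrightarrow> P (f(j := Suc (f j)))"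
    and "\<And>f. f j = 0 \<Longrightarrow> P (f(i := Suc (f i)))"
    and "\<And>f. P (f(i := Suc (f i), j := Suc (f j)))"
  shows "P e"
proof (cases "e i")
  case 0
  show ?thesis
  proof (cases "e j")
    case 0
    then show ?thesis using assms(2) \<open>e i = 0\<close> by simp
  next
    case (Suc k)
    have "e = (e(j := k))(j := Suc ((e(j := k)) j))"
      using Suc by auto
    then show ?thesis using assms(3)[of "e(j := k)"] \<open>e i = 0\<close> assms(1) by simp
  qed
next
  case (Suc m)
  show ?thesis
  proof (cases "e j")
    case 0
    have "e = (e(i := m))(i := Suc ((e(i := m)) i))"
      using Suc by auto
    then show ?thesis using assms(4)[of "e(i := m)"] 0 assms(1) by simp
  next
    case (Suc k)
    have "e = (e(i := m, j := k))(i := Suc ((e(i := m, j := k)) i), j := Suc ((e(i := m, j := k)) j))"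
      using Suc \<open>e i = Suc m\<close> assms(1) by (auto simp: fun_upd_twist)
    then show ?thesis using assms(5)[of "e(i := m, j := k)"] by simp
  qed
qed

(* The exchange relations are checked pointwise: split on the position of the columns
   relative to the diagonal, then put the occupation numbers at the rows involved into the
   normal form of state_induct_one_site or state_induct_two_sites, where the decrements
   e i - 1 coming from the creation operators cancel against increments. *)

lemma Tunit_row_exchange:
  assumes "a < b" "b < n" "i < n"
  shows "Tunit t n i (Suc b) (Tunit t n i (Suc a) v) e = t * Tunit t n i (Suc a) (Tunit t n i (Suc b) v) e"
  using assms
  by (cases a i rule: linorder_cases; cases b i rule: linorder_cases; cases "i = 0";
      (linarith | (induct e rule: state_induct_one_site[where i = i]; simp add: Tunit_simps))?)

lemma Tunit_row_col0_commute:
  assumes "b < n" "i < n"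
  shows "Tunit t n i (Suc b) (Tunit t n i 0 v) e = Tunit t n i 0 (Tunit t n i (Suc b) v) e"
  using assms
  by (cases b i rule: linorder_cases; cases "i = 0";
      (linarith | (induct e rule: state_induct_one_site[where i = i]; simp add: Tunit_simps;
        (simp add: algebra_simps)?))?)

lemma Tunit_col_commute:
  assumes "i \<noteq> j" "i < n" "j < n" "\<alpha> \<le> n"
  shows "Tunit t n j \<alpha> (Tunit t n i \<alpha> v) e = Tunit t n i \<alpha> (Tunit t n j \<alpha> v) e"
proof -
  have "Tunit t n j \<alpha> (Tunit t n i \<alpha> v) e = Tunit t n i \<alpha> (Tunit t n j \<alpha> v) e"
    if "i < j" "j < n" for i j
  proof (cases \<alpha>)
    case 0
    then show ?thesis
      using that
      by (cases "i = 0"; induct e rule: state_induct_two_sites[of i j]; simp add: Tunit_simps)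
  next
    case (Suc a)
    then show ?thesis
      using that assms(4)
      by (cases a i rule: linorder_cases; cases a j rule: linorder_cases; cases "i = 0";
          (linarith | (induct e rule: state_induct_two_sites[of i j]; simp add: Tunit_simps;
            (simp add: algebra_simps)?))?)
  qed
  from this[of i j] this[of j i] show ?thesis
    using assms by (cases i j rule: linorder_cases) auto
qed

lemma Tunit_antidiag_exchange:
  assumes "i < j" "j < n" "a < b" "b < n"
  shows "Tunit t n i (Suc b) (Tunit t n j (Suc a) v) e = t * Tunit t n j (Suc a) (Tunit t n i (Suc b) v) e"
  using assms
  by (cases a i rule: linorder_cases; cases a j rule: linorder_cases; cases b i rule: linorder_cases;
      cases b j rule: linorder_cases; cases "i = 0";
      (linarith | (induct e rule: state_induct_two_sites[of i j]; simp add: Tunit_simps;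
        (simp add: algebra_simps)?))?)

lemma Tunit_diag_exchange:
  assumes "i < j" "j < n" "a < b" "b < n"
  shows "Tunit t n i (Suc a) (Tunit t n j (Suc b) v) e =
    Tunit t n j (Suc b) (Tunit t n i (Suc a) v) e + (1 - t) * Tunit t n j (Suc a) (Tunit t n i (Suc b) v) e"
  using assms
  by (cases a i rule: linorder_cases; cases a j rule: linorder_cases; cases b i rule: linorder_cases;
      cases b j rule: linorder_cases; cases "i = 0";
      (linarith | (induct e rule: state_induct_two_sites[of i j]; simp add: Tunit_simps;
        (simp add: algebra_simps)?))?)

lemma Tunit_col0_commute:
  assumes "i < j" "j < n" "b < n"
  shows "Tunit t n i 0 (Tunit t n j (Suc b) v) e = Tunit t n j (Suc b) (Tunit t n i 0 v) e"
  using assms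
  by (cases b i rule: linorder_cases; cases b j rule: linorder_cases; cases "i = 0";
      (linarith | (induct e rule: state_induct_two_sites[of i j]; simp add: Tunit_simps;
        (simp add: algebra_simps)?))?)

lemma Tunit_col0_exchange:
  assumes "i < j" "j < n" "b < n"
  shows "Tunit t n i (Suc b) (Tunit t n j 0 v) e =
    t * Tunit t n j 0 (Tunit t n i (Suc b) v) e + (1 - t) * Tunit t n j (Suc b) (Tunit t n i 0 v) e"
  using assms
  by (cases b i rule: linorder_cases; cases b j rule: linorder_cases; cases "i = 0";
      (linarith | (induct e rule: state_induct_two_sites[of i j]; simp add: Tunit_simps;
        (simp add: algebra_simps)?))?)

definition RTT_lhs ::
    "'a::field \<Rightarrow> nat \<Rightarrow> 'a \<Rightarrow> 'a \<Rightarrow> 'a \<Rightarrow> nat \<Rightarrow> nat \<Rightarrow> nat \<Rightarrow> nat \<Rightarrow> 'a fvec \<Rightarrow> (nat \<Rightarrow> nat) \<Rightarrow> 'a"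
  where
  "RTT_lhs t n z x y i j a b v e =
     (\<Sum>a'=0..n-1. \<Sum>b'=0..n-1. Rmat t z a' b' i j * Tmat t n y b' b (Tmat t n x a' a v) e)"

definition RTT_rhs ::
    "'a::field \<Rightarrow> nat \<Rightarrow> 'a \<Rightarrow> 'a \<Rightarrow> 'a \<Rightarrow> nat \<Rightarrow> nat \<Rightarrow> nat \<Rightarrow> nat \<Rightarrow> 'a fvec \<Rightarrow> (nat \<Rightarrow> nat) \<Rightarrow> 'a"
  where
  "RTT_rhs t n z x y i j a b v e =
     (\<Sum>i'=0..n. \<Sum>j'=0..n. Tmat t n x i i' (Tmat t n y j j' v) e * Rmat t z a b i' j')"

lemma RTT_lhs_eq:
  assumes "i < n" "j < n"
  shows "RTT_lhs t n z x y i j a b v e =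
    (if i = j then Tmat t n y i b (Tmat t n x i a v) e
     else Rmat t z i j i j * Tmat t n y j b (Tmat t n x i a v) e
        + Rmat t z j i i j * Tmat t n y i b (Tmat t n x j a v) e)"
  using assms by (simp add: RTT_lhs_def sum_Rmat_upper)

lemma RTT_rhs_eq:
  assumes "a \<le> n" "b \<le> n"
  shows "RTT_rhs t n z x y i j a b v e =
    (if a = b then Tmat t n x i a (Tmat t n y j a v) e
     else Tmat t n x i a (Tmat t n y j b v) e * Rmat t z a b a b
        + Tmat t n x i b (Tmat t n y j a v) e * Rmat t z a b b a)"
  using assms by (simp add: RTT_rhs_def sum_Rmat_lower)

lemmas RTT_expand = RTT_lhs_eq RTT_rhs_eq Tmat_Tmat_eq_scale_Tunit_Tunit Rmat_def

lemma RTT_same_row_less: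
  assumes "i < n" "a < b" "b \<le> n" "y = x * z" "1 - t * z \<noteq> 0"
  shows "RTT_lhs t n z x y i i a b v e = RTT_rhs t n z x y i i a b v e"
proof -
  obtain b' where b: "b = Suc b'" using assms(2) by (cases b) auto
  have "Tunit t n i b (Tunit t n i a v) e = (if a = 0 then 1 else t) * Tunit t n i a (Tunit t n i b v) e"
  proof (cases a)
    case 0
    then show ?thesis using b assms Tunit_row_col0_commute[of b' n i] by simp
  next
    case (Suc a')
    then show ?thesis using b assms Tunit_row_exchange[of a' b' n i] by simp
  qed
  \<comment> \<open>field_simps puts the two R-matrix terms over the denominator (1 - t z)^2\<close>
  moreover have "(1 - t * z) * (1 - t * z) \<noteq> 0"
    using assms(5) by simp
  ultimately show ?thesis
    using assms by (simp add: RTT_expand field_simps)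
qed

lemma RTT_same_row_greater:
  assumes "i < n" "b < a" "a \<le> n" "y = x * z" "1 - t * z \<noteq> 0"
  shows "RTT_lhs t n z x y i i a b v e = RTT_rhs t n z x y i i a b v e"
proof -
  obtain a' where a: "a = Suc a'" using assms(2) by (cases a) auto
  have "Tunit t n i a (Tunit t n i b v) e = (if b = 0 then 1 else t) * Tunit t n i b (Tunit t n i a v) e"
  proof (cases b)
    case 0
    then show ?thesis using a assms Tunit_row_col0_commute[of a' n i] by simp
  next
    case (Suc b')
    then show ?thesis using a assms Tunit_row_exchange[of b' a' n i] by simp
  qed
  moreover have "(1 - t * z) * (1 - t * z) \<noteq> 0"
    using assms(5) by simp
  ultimately show ?thesis
    using assms by (simp add: RTT_expand field_simps)
qed

lemma RTT_same_col:
  assumes "i < n" "j < n" "a \<le> n" "1 - t * z \<noteq> 0"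
  shows "RTT_lhs t n z x y i j a a v e = RTT_rhs t n z x y i j a a v e"
proof (cases "i = j")
  case True
  then show ?thesis
    using assms by (simp add: RTT_expand)
next
  case False
  then have commute: "Tunit t n j a (Tunit t n i a v) e = Tunit t n i a (Tunit t n j a v) e"
    using assms Tunit_col_commute by blast
  have nz: "(1 - t * z) * (1 - t * z) \<noteq> 0"
    using assms(4) by simp
  show ?thesis
    using False assms nz by (simp add: RTT_expand commute field_simps)
qed

lemma RTT_distinct_rows_less:
  assumes "i < n" "j < n" "i \<noteq> j" "a < b" "b \<le> n" "y = x * z" "1 - t * z \<noteq> 0"
  shows "RTT_lhs t n z x y i j a b v e = RTT_rhs t n z x y i j a b v e"
proof -
  obtain b' where b: "b = Suc b'" using assms(4) by (cases b) auto
  have nz: "(1 - t * z) * (1 - t * z) \<noteq> 0"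
    using assms(7) by simp
  consider "i < j" | "j < i" using assms(3) by linarith
  then show ?thesis
  proof cases
    case 1
    show ?thesis
    proof (cases a)
      case 0
      have commute: "Tunit t n i 0 (Tunit t n j b v) e = Tunit t n j b (Tunit t n i 0 v) e"
        using 1 b assms Tunit_col0_commute[of i j n b'] by simp
      show ?thesis using 0 1 assms nz by (simp add: RTT_expand commute field_simps)
    next
      case (Suc a')
      have antidiag: "Tunit t n i b (Tunit t n j a v) e = t * Tunit t n j a (Tunit t n i b v) e"
        using Suc 1 b assms Tunit_antidiag_exchange[of i j n a' b'] by simp
      have diag: "Tunit t n i a (Tunit t n j b v) e =
          Tunit t n j b (Tunit t n i a v) e + (1 - t) * Tunit t n j a (Tunit t n i b v) e"
        using Suc 1 b assms Tunit_diag_exchange[of i j n a' b'] by simp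
      have "a \<noteq> 0" using Suc by simp
      with 1 assms nz show ?thesis by (simp add: RTT_expand antidiag diag field_simps)
    qed
  next
    case 2
    show ?thesis
    proof (cases a)
      case 0
      have exchange: "Tunit t n j b (Tunit t n i 0 v) e =
          t * Tunit t n i 0 (Tunit t n j b v) e + (1 - t) * Tunit t n i b (Tunit t n j 0 v) e"
        using 2 b assms Tunit_col0_exchange[of j i n b'] by simp
      show ?thesis using 0 2 assms nz by (simp add: RTT_expand exchange field_simps)
    next
      case (Suc a')
      have antidiag: "Tunit t n j b (Tunit t n i a v) e = t * Tunit t n i a (Tunit t n j b v) e"
        using Suc 2 b assms Tunit_antidiag_exchange[of j i n a' b'] by simp
      have "a \<noteq> 0" using Suc by simp
      with 2 assms nz show ?thesis by (simp add: RTT_expand antidiag field_simps)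
    qed
  qed
qed

lemma RTT_distinct_rows_greater:
  assumes "i < n" "j < n" "i \<noteq> j" "b < a" "a \<le> n" "y = x * z" "1 - t * z \<noteq> 0"
  shows "RTT_lhs t n z x y i j a b v e = RTT_rhs t n z x y i j a b v e"
proof -
  obtain a' where a: "a = Suc a'" using assms(4) by (cases a) auto
  have nz: "(1 - t * z) * (1 - t * z) \<noteq> 0"
    using assms(7) by simp
  consider "i < j" | "j < i" using assms(3) by linarith
  then show ?thesis
  proof cases
    case 1
    show ?thesis
    proof (cases b)
      case 0
      have exchange: "Tunit t n i a (Tunit t n j 0 v) e =
          t * Tunit t n j 0 (Tunit t n i a v) e + (1 - t) * Tunit t n j a (Tunit t n i 0 v) e"
        using 1 a assms Tunit_col0_exchange[of i j n a'] by simp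
      have commute: "Tunit t n i 0 (Tunit t n j a v) e = Tunit t n j a (Tunit t n i 0 v) e"
        using 1 a assms Tunit_col0_commute[of i j n a'] by simp
      show ?thesis using 0 1 assms nz by (simp add: RTT_expand exchange commute field_simps)
    next
      case (Suc b')
      have antidiag: "Tunit t n i a (Tunit t n j b v) e = t * Tunit t n j b (Tunit t n i a v) e"
        using Suc 1 a assms Tunit_antidiag_exchange[of i j n b' a'] by simp
      have "b \<noteq> 0" using Suc by simp
      with 1 assms nz show ?thesis by (simp add: RTT_expand antidiag field_simps)
    qed
  next
    case 2
    show ?thesis
    proof (cases b)
      case 0
      have commute: "Tunit t n j 0 (Tunit t n i a v) e = Tunit t n i a (Tunit t n j 0 v) e"
        using 2 a assms Tunit_col0_commute[of j i n a'] by simp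
      show ?thesis using 0 2 assms nz by (simp add: RTT_expand commute field_simps)
    next
      case (Suc b')
      have diag: "Tunit t n j b (Tunit t n i a v) e =
          Tunit t n i a (Tunit t n j b v) e + (1 - t) * Tunit t n i b (Tunit t n j a v) e"
        using Suc 2 a assms Tunit_diag_exchange[of j i n b' a'] by simp
      have "b \<noteq> 0" using Suc by simp
      with 2 assms nz show ?thesis by (simp add: RTT_expand diag field_simps)
    qed
  qed
qed

lemma RTT_relation:
  assumes "i < n" "j < n" "a \<le> n" "b \<le> n" "y = x * z" "1 - t * z \<noteq> 0"
  shows "RTT_lhs t n z x y i j a b v e = RTT_rhs t n z x y i j a b v e"
proof (cases a b rule: linorder_cases)
  case less
  then show ?thesis
    using assms by (cases "i = j") (simp_all add: RTT_same_row_less RTT_distinct_rows_less)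
next
  case equal
  then show ?thesis
    using assms RTT_same_col by simp
next
  case greater
  then show ?thesis
    using assms by (cases "i = j") (simp_all add: RTT_same_row_greater RTT_distinct_rows_greater)
qed

theorem proposition5p2:
  fixes t x y :: "'a::field" and n a b i j :: nat
  assumes "n \<ge> 1" and "a \<le> n" and "b \<le> n" and "i \<le> n - 1" and "j \<le> n - 1"
    and "x \<noteq> 0" and "1 - t * (y / x) \<noteq> 0"
  shows "\<forall>v :: 'a fvec.
     (\<lambda>e. \<Sum>a'=0..n-1. \<Sum>b'=0..n-1. Rmat t (y / x) a' b' i j * Tmat t n y b' b (Tmat t n x a' a v) e)
   = (\<lambda>e. \<Sum>i'=0..n. \<Sum>j'=0..n. Tmat t n x i i' (Tmat t n y j j' v) e * Rmat t (y / x) a b i' j')"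
proof (intro allI ext)
  fix v :: "'a fvec" and e :: "nat \<Rightarrow> nat"
  have "y = x * (y / x)"
    using assms(6) by simp
  then have "RTT_lhs t n (y / x) x y i j a b v e = RTT_rhs t n (y / x) x y i j a b v e"
    using assms by (intro RTT_relation) auto
  then show "(\<Sum>a'=0..n-1. \<Sum>b'=0..n-1. Rmat t (y / x) a' b' i j * Tmat t n y b' b (Tmat t n x a' a v) e)
     = (\<Sum>i'=0..n. \<Sum>j'=0..n. Tmat t n x i i' (Tmat t n y j j' v) e * Rmat t (y / x) a b i' j')"
    by (simp add: RTT_lhs_def RTT_rhs_def)
qed

end
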